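(* Let $a>0$, $T>0$ and $\phi\in\mathcal D[0,T]$. If $(r,g)\in\Pi(\phi)$, then $(r,\Lambda_a(g))\in\Pi(\Lambda_a(\phi))$.
   Context: $\mathcal D[0,T]$ is the space of right-continuous functions $[0,T]\to\mathbb R$ with left limits. $x^+=\max(x,0)$, $\wedge=\min$, $\vee=\max$. For $a>0$ and a real function $f$ on an interval $[0,S]$, $\Lambda_a(f)(t)=f(t)-\sup_{s\in[0,t]}\big[(f(s)-a)^+\wedge\inf_{u\in[s,t]}f(u)\big]$, $t\in[0,S]$. For $\phi\in\mathcal D[0,T]$, set $\phi(0-)=\phi(0)$ and let $G_\phi=\{(t,z)\in[0,T]\times\mathbb R:z\in[\phi(t-)\wedge\phi(t),\phi(t-)\vee\phi(t)]\}$, ordered by $(t_1,z_1)\le(t_2,z_2)$ iff either $t_1<t_2$, or $t_1=t_2$ and $|\phi(t_1-)-z_1|\le|\phi(t_1-)-z_2|$. $\Pi(\phi)$ is the set of continuous maps $(r,g):[0,1]\to G_\phi$ that are onto $G_\phi$ and nondecreasing with respect to this order. *)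

theory Defs
  imports "HOL-Analysis.Analysis"
begin

text \<open>Functions on [0,T] are represented as total functions real => real;
only their values on [0,T] matter.\<close>

definition cadlag :: "real \<Rightarrow> (real \<Rightarrow> real) \<Rightarrow> bool" where
  "cadlag T \<phi> \<longleftrightarrow>
     (\<forall>t\<in>{0..<T}. (\<phi> \<longlongrightarrow> \<phi> t) (at_right t)) \<and>
     (\<forall>t\<in>{0<..T}. \<exists>l. (\<phi> \<longlongrightarrow> l) (at_left t))"

text \<open>Left limit phi(t-), with the convention phi(0-) = phi(0).\<close>
definition leftlim :: "(real \<Rightarrow> real) \<Rightarrow> real \<Rightarrow> real" where
  "leftlim \<phi> t = (if t \<le> 0 then \<phi> 0 else Lim (at_left t) \<phi>)"

definition Lambda :: "real \<Rightarrow> (real \<Rightarrow> real) \<Rightarrow> real \<Rightarrow> real" where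
  "Lambda a f t = f t - (SUP s\<in>{0..t}. min (max (f s - a) 0) (INF u\<in>{s..t}. f u))"

definition cgraph :: "real \<Rightarrow> (real \<Rightarrow> real) \<Rightarrow> (real \<times> real) set" where
  "cgraph T \<phi> = {(t, z). t \<in> {0..T} \<and>
       min (leftlim \<phi> t) (\<phi> t) \<le> z \<and> z \<le> max (leftlim \<phi> t) (\<phi> t)}"

definition graph_le :: "(real \<Rightarrow> real) \<Rightarrow> real \<times> real \<Rightarrow> real \<times> real \<Rightarrow> bool" where
  "graph_le \<phi> p q \<longleftrightarrow> fst p < fst q \<or>
     (fst p = fst q \<and> \<bar>leftlim \<phi> (fst p) - snd p\<bar> \<le> \<bar>leftlim \<phi> (fst p) - snd q\<bar>)"

definition param_reps :: "real \<Rightarrow> (real \<Rightarrow> real) \<Rightarrow> ((real \<Rightarrow> real) \<times> (real \<Rightarrow> real)) set" where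
  "param_reps T \<phi> = {(r, g).
      continuous_on {0..1} r \<and> continuous_on {0..1} g \<and>
      (\<lambda>s. (r s, g s)) ` {0..1} = cgraph T \<phi> \<and>
      (\<forall>s1\<in>{0..1}. \<forall>s2\<in>{0..1}. s1 \<le> s2 \<longrightarrow> graph_le \<phi> (r s1, g s1) (r s2, g s2))}"

end

theory Submission
  imports Defs
begin

(* The proof rests on three facts.
   (1) Lambda_a(f) = f - K_a(f), where K_a(f)(t) is the running supremum of the
       terms min((f(s)-a)^+, inf_[s,t] f), s in [0,t].  K_a(f) moves by at most
       the oscillation of f, so Lambda_a(g) is continuous, and Lambda_a(g) is
       monotone on any interval where g stays on one side of its endpoint value.
   (2) At a parameter s with g(s) = phi(r(s)) (the end of the jump segment over
       r(s)) we have Lambda_a(g)(s) = Lambda_a(phi)(r(s)): every value of phi on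
       [0,r(s)] is taken by g before s, and the intermediate values g takes on
       jump segments contribute nothing beyond the left limits of phi.
   (3) Hence Lambda_a(phi)(t-) = Lambda_a(g)(p) for the first parameter p of the
       fibre r^{-1}(t), and on that fibre Lambda_a(g) runs monotonically from
       Lambda_a(phi)(t-) to Lambda_a(phi)(t).  Surjectivity onto the completed graph of
   Lambda_a(phi) follows from the intermediate value theorem, the order property
   from the monotonicity along fibres. *)

definition lam_term :: "real \<Rightarrow> (real \<Rightarrow> real) \<Rightarrow> real \<Rightarrow> real \<Rightarrow> real" where
  "lam_term a f t s = min (max (f s - a) 0) (INF u\<in>{s..t}. f u)"

definition lam_sup :: "real \<Rightarrow> (real \<Rightarrow> real) \<Rightarrow> real \<Rightarrow> real" where
  "lam_sup a f t = (SUP s\<in>{0..t}. lam_term a f t s)"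

lemma Lambda_eq: "Lambda a f t = f t - lam_sup a f t"
  by (simp add: Lambda_def lam_sup_def lam_term_def)

lemma INF_Icc_greatest:
  "u \<le> s \<Longrightarrow> (\<And>x. x \<in> {u..s} \<Longrightarrow> c \<le> f x) \<Longrightarrow> c \<le> (INF y\<in>{u..s}. f y)"
  for f :: "real \<Rightarrow> real"
  by (rule cINF_greatest) auto

context
  fixes f :: "real \<Rightarrow> real" and S B :: real
  assumes bounded: "\<forall>x\<in>{0..S}. \<bar>f x\<bar> \<le> B"
begin

lemma INF_Icc_lower: "0 \<le> u \<Longrightarrow> s \<le> S \<Longrightarrow> x \<in> {u..s} \<Longrightarrow> (INF y\<in>{u..s}. f y) \<le> f x"
proof (rule cINF_lower)
  assume "0 \<le> u" "s \<le> S"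
  show "bdd_below (f ` {u..s})"
  proof (rule bdd_belowI[where m="-B"])
    fix y assume "y \<in> f ` {u..s}"
    then obtain x where "x \<in> {u..s}" "y = f x" by auto
    with \<open>0 \<le> u\<close> \<open>s \<le> S\<close> have "x \<in> {0..S}" by auto
    then have "\<bar>f x\<bar> \<le> B" using bounded by blast
    then show "- B \<le> y" using \<open>y = f x\<close> by (simp add: abs_le_iff)
  qed
qed

lemma lam_term_le_bound: "0 \<le> u \<Longrightarrow> u \<le> s \<Longrightarrow> s \<le> S \<Longrightarrow> lam_term a f s u \<le> B"
proof -
  assume h: "0 \<le> u" "u \<le> s" "s \<le> S"
  have "lam_term a f s u \<le> (INF y\<in>{u..s}. f y)" by (simp add: lam_term_def)
  also have "\<dots> \<le> f s" using INF_Icc_lower h by auto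
  also have "\<dots> \<le> B" using bounded h by (auto simp: abs_le_iff)
  finally show ?thesis .
qed

lemma lam_term_le_sup: "0 \<le> u \<Longrightarrow> u \<le> s \<Longrightarrow> s \<le> S \<Longrightarrow> lam_term a f s u \<le> lam_sup a f s"
  unfolding lam_sup_def
  by (rule cSUP_upper) (auto intro!: bdd_aboveI[where M=B] lam_term_le_bound)

lemma lam_sup_least:
  "0 \<le> s \<Longrightarrow> (\<And>u. u \<in> {0..s} \<Longrightarrow> lam_term a f s u \<le> c) \<Longrightarrow> lam_sup a f s \<le> c"
  unfolding lam_sup_def by (rule cSUP_least) auto

lemma lam_sup_increase:
  assumes "0 \<le> s1" "s1 \<le> s2" "s2 \<le> S" "\<And>u. u \<in> {s1..s2} \<Longrightarrow> f u \<le> f s1 + d"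
  shows "lam_sup a f s2 \<le> lam_sup a f s1 + d"
proof (rule lam_sup_least)
  show "0 \<le> s2" using assms by auto
  fix u assume u: "u \<in> {0..s2}"
  have "f s1 \<le> f s1 + d" by (rule assms(4)) (use assms in auto)
  then have d: "d \<ge> 0" by simp
  show "lam_term a f s2 u \<le> lam_sup a f s1 + d"
  proof (cases "u \<le> s1")
    case True
    have "(INF y\<in>{u..s2}. f y) \<le> (INF y\<in>{u..s1}. f y)"
      by (rule INF_Icc_greatest) (use True assms u in \<open>auto intro: INF_Icc_lower\<close>)
    hence "lam_term a f s2 u \<le> lam_term a f s1 u" by (auto simp: lam_term_def)
    also have "\<dots> \<le> lam_sup a f s1" using lam_term_le_sup True u assms by auto
    finally show ?thesis using d by simp
  next
    case False
    have "f u \<le> f s1 + d" by (rule assms(4)) (use u False in auto)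
    have "lam_term a f s2 u \<le> min (max (f u - a) 0) (f u)"
      using INF_Icc_lower[of u s2 u] u assms by (auto simp: lam_term_def)
    also have "\<dots> \<le> lam_term a f s1 s1 + d"
      using \<open>f u \<le> f s1 + d\<close> d by (auto simp: lam_term_def min_def max_def)
    also have "\<dots> \<le> lam_sup a f s1 + d" using lam_term_le_sup[of s1 s1] assms by auto
    finally show ?thesis .
  qed
qed

lemma lam_sup_decrease:
  assumes "0 \<le> s1" "s1 \<le> s2" "s2 \<le> S" "\<And>u. u \<in> {s1..s2} \<Longrightarrow> f s1 - d \<le> f u"
  shows "lam_sup a f s1 - d \<le> lam_sup a f s2"
proof -
  have "f s1 - d \<le> f s1" by (rule assms(4)) (use assms in auto)
  then have d: "d \<ge> 0" by simp
  have "lam_sup a f s1 \<le> lam_sup a f s2 + d"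
  proof (rule lam_sup_least)
    show "0 \<le> s1" by fact
    fix u assume u: "u \<in> {0..s1}"
    have "(INF y\<in>{u..s1}. f y) - d \<le> (INF y\<in>{u..s2}. f y)"
    proof (rule INF_Icc_greatest)
      show "u \<le> s2" using u assms by auto
      fix x assume x: "x \<in> {u..s2}"
      have "(INF y\<in>{u..s1}. f y) \<le> f (min x s1)"
        using INF_Icc_lower[of u s1 "min x s1"] u x assms by auto
      moreover have "f s1 - d \<le> f x" if "s1 \<le> x" by (rule assms(4)) (use x that in auto)
      ultimately show "(INF y\<in>{u..s1}. f y) - d \<le> f x"
        using d by (cases "x \<le> s1") (auto simp: min_def)
    qed
    hence "lam_term a f s1 u \<le> lam_term a f s2 u + d" using d by (auto simp: lam_term_def min_def)
    also have "\<dots> \<le> lam_sup a f s2 + d" using lam_term_le_sup[of u s2] u assms by auto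
    finally show "lam_term a f s1 u \<le> lam_sup a f s2 + d" .
  qed
  thus ?thesis by simp
qed

lemma Lambda_le_if_below_end:
  assumes "0 \<le> s1" "s1 \<le> s2" "s2 \<le> S" "\<And>u. u \<in> {s1..s2} \<Longrightarrow> f u \<le> f s2"
  shows "Lambda a f s1 \<le> Lambda a f s2"
proof -
  have "lam_sup a f s2 \<le> lam_sup a f s1 + (f s2 - f s1)"
    by (rule lam_sup_increase) (use assms in auto)
  then show ?thesis by (simp add: Lambda_eq)
qed

lemma Lambda_ge_if_above_end:
  assumes "0 \<le> s1" "s1 \<le> s2" "s2 \<le> S" "\<And>u. u \<in> {s1..s2} \<Longrightarrow> f s2 \<le> f u"
  shows "Lambda a f s2 \<le> Lambda a f s1"
proof -
  have "lam_sup a f s1 - (f s1 - f s2) \<le> lam_sup a f s2"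
    by (rule lam_sup_decrease) (use assms in auto)
  then show ?thesis by (simp add: Lambda_eq)
qed

text \<open>A left limit L of f at v is seen by the running supremum at any t \<ge> v:
  the terms at points just before v approach the value below.\<close>

lemma lam_sup_ge_leftlim_term:
  assumes lim: "(f \<longlongrightarrow> L) (at_left v)" and v: "0 < v" "v \<le> t" "t \<le> S"
  shows "min (max (L - a) 0) (min L (INF x\<in>{v..t}. f x)) \<le> lam_sup a f t"
proof (rule field_le_epsilon)
  fix e :: real assume e: "0 < e"
  have "\<forall>\<^sub>F x in at_left v. dist (f x) L < e" using lim e by (rule tendstoD)
  then obtain b where b: "b < v" "\<And>y. b < y \<Longrightarrow> y < v \<Longrightarrow> \<bar>f y - L\<bar> < e"
    unfolding eventually_at_left_field dist_real_def by blast
  define v' where "v' = (max b 0 + v) / 2"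
  have v': "max b 0 < v'" "v' < v" using b v by (auto simp: v'_def)
  have near: "\<bar>f v' - L\<bar> < e" using b(2) v' by auto
  have inf: "min (L - e) (INF x\<in>{v..t}. f x) \<le> (INF x\<in>{v'..t}. f x)"
  proof (rule INF_Icc_greatest)
    show "v' \<le> t" using v' v by auto
    fix x assume x: "x \<in> {v'..t}"
    show "min (L - e) (INF x\<in>{v..t}. f x) \<le> f x"
    proof (cases "x < v")
      case True thus ?thesis using b(2)[of x] x v' by auto
    next
      case False thus ?thesis using INF_Icc_lower[of v t x] x v by auto
    qed
  qed
  have "min (max (L - a) 0) (min L (INF x\<in>{v..t}. f x)) - e \<le> lam_term a f t v'"
    using near inf e unfolding lam_term_def by (auto simp: min_def max_def split: if_splits)
  also have "\<dots> \<le> lam_sup a f t" by (rule lam_term_le_sup) (use v' v in auto)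
  finally show "min (max (L - a) 0) (min L (INF x\<in>{v..t}. f x)) \<le> lam_sup a f t + e"
    by simp
qed

end

text \<open>Lambda_a maps continuous functions to continuous functions, since the running
  supremum moves by at most the local oscillation of the function.\<close>

lemma Lambda_continuous:
  fixes g :: "real \<Rightarrow> real"
  assumes gc: "continuous_on {0..S} g"
  shows "continuous_on {0..S} (Lambda a g)"
proof -
  have "bounded (g ` {0..S})" by (rule compact_imp_bounded[OF compact_continuous_image[OF gc compact_Icc]])
  then obtain B where B: "\<forall>x\<in>{0..S}. \<bar>g x\<bar> \<le> B" by (auto simp: bounded_iff)
  have osc: "\<bar>lam_sup a g y - lam_sup a g x\<bar> \<le> e"
    if xy: "x \<in> {0..S}" "y \<in> {0..S}" "x \<le> y" and near: "\<And>u. u \<in> {x..y} \<Longrightarrow> \<bar>g u - g x\<bar> \<le> e"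
    for x y e
  proof -
    have "lam_sup a g y \<le> lam_sup a g x + e"
    proof (rule lam_sup_increase[OF B])
      fix u assume "u \<in> {x..y}"
      from near[OF this] show "g u \<le> g x + e" by simp
    qed (use xy in auto)
    moreover have "lam_sup a g x - e \<le> lam_sup a g y"
    proof (rule lam_sup_decrease[OF B])
      fix u assume "u \<in> {x..y}"
      from near[OF this] show "g x - e \<le> g u" by simp
    qed (use xy in auto)
    ultimately show ?thesis by auto
  qed
  have "uniformly_continuous_on {0..S} g"
    by (rule compact_uniformly_continuous[OF gc compact_Icc])
  show ?thesis unfolding continuous_on_iff
  proof (intro ballI allI impI)
    fix x e :: real assume x: "x \<in> {0..S}" and e: "0 < e"
    obtain d where d: "d > 0"
      and dh: "\<And>u v. u \<in> {0..S} \<Longrightarrow> v \<in> {0..S} \<Longrightarrow> dist u v < d \<Longrightarrow> \<bar>g u - g v\<bar> < e/3"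
      using \<open>uniformly_continuous_on {0..S} g\<close> e unfolding uniformly_continuous_on_def dist_real_def
      by (metis divide_pos_pos zero_less_numeral)
    show "\<exists>d>0. \<forall>y\<in>{0..S}. dist y x < d \<longrightarrow> dist (Lambda a g y) (Lambda a g x) < e"
    proof (intro exI[of _ d] conjI ballI impI d)
      fix y assume y: "y \<in> {0..S}" and dy: "dist y x < d"
      have "\<bar>lam_sup a g y - lam_sup a g x\<bar> \<le> e/3"
      proof (cases "x \<le> y")
        case True
        show ?thesis
        proof (rule osc[OF x y True])
          fix u assume "u \<in> {x..y}"
          hence "u \<in> {0..S}" "dist u x < d" using x y dy by (auto simp: dist_real_def)
          thus "\<bar>g u - g x\<bar> \<le> e/3" using dh[of u x] x by simp
        qed
      next
        case False
        have "\<bar>lam_sup a g x - lam_sup a g y\<bar> \<le> e/3"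
        proof (rule osc[OF y x])
          show "y \<le> x" using False by simp
          fix u assume "u \<in> {y..x}"
          hence "u \<in> {0..S}" "dist u y < d" using x y dy by (auto simp: dist_real_def)
          thus "\<bar>g u - g y\<bar> \<le> e/3" using dh[of u y] y by simp
        qed
        thus ?thesis by (simp add: abs_minus_commute)
      qed
      moreover have "\<bar>g y - g x\<bar> < e/3" using dh[OF y x dy] .
      ultimately show "dist (Lambda a g y) (Lambda a g x) < e"
        unfolding Lambda_eq dist_real_def by linarith
    qed
  qed
qed

lemma segment_far_end:
  "min L P \<le> z \<Longrightarrow> z \<le> max L P \<Longrightarrow> \<bar>L - P\<bar> \<le> \<bar>L - z\<bar> \<Longrightarrow> z = (P::real)"
  by (cases "L \<le> P"; cases "L \<le> z") (simp_all add: min_def max_def)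

lemma segment_order:
  "min L P \<le> z1 \<Longrightarrow> z1 \<le> max L P \<Longrightarrow> min L P \<le> z2 \<Longrightarrow> z2 \<le> max L P \<Longrightarrow>
   \<bar>L - z1\<bar> \<le> \<bar>L - z2\<bar> \<Longrightarrow> (L \<le> P \<longrightarrow> z1 \<le> z2) \<and> (\<not> L \<le> P \<longrightarrow> z2 \<le> (z1::real))"
  by (cases "L \<le> P"; cases "L \<le> z1"; cases "L \<le> z2") (simp_all add: min_def max_def)

locale param_rep =
  fixes T :: real and \<phi> r g :: "real \<Rightarrow> real"
  assumes T_pos: "T > 0" and cadlag: "cadlag T \<phi>"
    and rep: "(r, g) \<in> param_reps T \<phi>"
begin

lemma r_continuous: "continuous_on {0..1} r"
  and g_continuous: "continuous_on {0..1} g"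
  and image_eq: "(\<lambda>s. (r s, g s)) ` {0..1} = cgraph T \<phi>"
  and graph_mono: "\<And>s1 s2. s1 \<in> {0..1} \<Longrightarrow> s2 \<in> {0..1} \<Longrightarrow> s1 \<le> s2 \<Longrightarrow>
         graph_le \<phi> (r s1, g s1) (r s2, g s2)"
  using rep by (auto simp: param_reps_def)

lemma on_graph: "s \<in> {0..1} \<Longrightarrow> (r s, g s) \<in> cgraph T \<phi>"
  using image_eq by blast

lemma r_range: "s \<in> {0..1} \<Longrightarrow> r s \<in> {0..T}"
  using on_graph by (simp add: cgraph_def)

lemma g_on_segment:
  "s \<in> {0..1} \<Longrightarrow> min (leftlim \<phi> (r s)) (\<phi> (r s)) \<le> g s \<and> g s \<le> max (leftlim \<phi> (r s)) (\<phi> (r s))"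
  using on_graph by (simp add: cgraph_def)

lemma graph_attained: "(t, z) \<in> cgraph T \<phi> \<Longrightarrow> \<exists>s\<in>{0..1}. r s = t \<and> g s = z"
  by (subst (asm) image_eq[symmetric]) force

lemma phi_attained: "t \<in> {0..T} \<Longrightarrow> \<exists>s\<in>{0..1}. r s = t \<and> g s = \<phi> t"
  by (rule graph_attained) (auto simp: cgraph_def)

lemma r_mono: "s1 \<in> {0..1} \<Longrightarrow> s2 \<in> {0..1} \<Longrightarrow> s1 \<le> s2 \<Longrightarrow> r s1 \<le> r s2"
  using graph_mono by (force simp: graph_le_def)

lemma less_if_r_less: "s1 \<in> {0..1} \<Longrightarrow> s2 \<in> {0..1} \<Longrightarrow> r s1 < r s2 \<Longrightarrow> s1 < s2"
  using r_mono[of s2 s1] by force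

lemma fiber_distance_mono:
  "s1 \<in> {0..1} \<Longrightarrow> s2 \<in> {0..1} \<Longrightarrow> s1 \<le> s2 \<Longrightarrow> r s1 = r s2 \<Longrightarrow>
   \<bar>leftlim \<phi> (r s1) - g s1\<bar> \<le> \<bar>leftlim \<phi> (r s1) - g s2\<bar>"
  using graph_mono by (force simp: graph_le_def)

lemma fiber_interval:
  "x \<in> {0..1} \<Longrightarrow> y \<in> {0..1} \<Longrightarrow> x \<le> u \<Longrightarrow> u \<le> y \<Longrightarrow> r x = r y \<Longrightarrow> u \<in> {0..1} \<and> r u = r x"
proof -
  assume h: "x \<in> {0..1}" "y \<in> {0..1}" "x \<le> u" "u \<le> y" "r x = r y"
  then have u: "u \<in> {0..1}" by auto
  have "r x \<le> r u" "r u \<le> r y" using r_mono[of x u] r_mono[of u y] h u by auto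
  with u h(5) show ?thesis by auto
qed

lemma fiber_stays_at_phi:
  assumes "s1 \<in> {0..1}" "s2 \<in> {0..1}" "s1 \<le> s2" "r s1 = r s2" "g s1 = \<phi> (r s1)"
  shows "g s2 = \<phi> (r s2)"
  using segment_far_end[of "leftlim \<phi> (r s2)" "\<phi> (r s2)" "g s2"] g_on_segment[OF assms(2)]
    fiber_distance_mono[OF assms(1-4)] assms(4,5) by simp

lemma fiber_direction:
  assumes "s1 \<in> {0..1}" "s2 \<in> {0..1}" "s1 \<le> s2" "r s1 = r s2"
  shows "(leftlim \<phi> (r s1) \<le> \<phi> (r s1) \<longrightarrow> g s1 \<le> g s2) \<and>
         (\<not> leftlim \<phi> (r s1) \<le> \<phi> (r s1) \<longrightarrow> g s2 \<le> g s1)"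
  using segment_order[of "leftlim \<phi> (r s1)" "\<phi> (r s1)" "g s1" "g s2"] g_on_segment[OF assms(1)]
    g_on_segment[OF assms(2)] fiber_distance_mono[OF assms] assms(4) by simp

lemma r_0: "r 0 = 0" and g_0: "g 0 = \<phi> 0"
proof -
  obtain s where s: "s \<in> {0..1}" "r s = 0" using phi_attained[of 0] T_pos by auto
  then show r0: "r 0 = 0" using r_mono[of 0 s] r_range[of 0] by auto
  show "g 0 = \<phi> 0" using g_on_segment[of 0] r0 by (simp add: leftlim_def)
qed

text \<open>g is bounded, and so is phi, all of whose values g takes.\<close>

lemma common_bound:
  obtains B where "\<forall>x\<in>{0..1}. \<bar>g x\<bar> \<le> B" and "\<forall>t\<in>{0..T}. \<bar>\<phi> t\<bar> \<le> B"
proof -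
  have "bounded (g ` {0..1})"
    by (rule compact_imp_bounded[OF compact_continuous_image[OF g_continuous compact_Icc]])
  then obtain B where B: "\<forall>x\<in>{0..1}. \<bar>g x\<bar> \<le> B" by (auto simp: bounded_iff)
  moreover have "\<forall>t\<in>{0..T}. \<bar>\<phi> t\<bar> \<le> B"
    using phi_attained B by fastforce
  ultimately show ?thesis using that by blast
qed

lemma leftlim_tendsto: "t \<in> {0<..T} \<Longrightarrow> (\<phi> \<longlongrightarrow> leftlim \<phi> t) (at_left t)"
proof -
  assume t: "t \<in> {0<..T}"
  then obtain l where l: "(\<phi> \<longlongrightarrow> l) (at_left t)" using cadlag unfolding cadlag_def by blast
  have "leftlim \<phi> t = l" using t tendsto_Lim[OF _ l] by (simp add: leftlim_def)
  thus ?thesis using l by simp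
qed

lemma leftlim_lower_bound:
  assumes "0 \<le> v" "v < t'" "t' \<le> t" "t \<le> T" and c: "\<And>x. x \<in> {v..t} \<Longrightarrow> c \<le> \<phi> x"
  shows "c \<le> leftlim \<phi> t'"
proof (rule tendsto_lowerbound[OF leftlim_tendsto])
  show "t' \<in> {0<..T}" using assms by auto
  show "\<forall>\<^sub>F x in at_left t'. c \<le> \<phi> x"
    using eventually_at_left_real[OF assms(2)] by eventually_elim (use assms c in auto)
qed simp

lemma phi_value_reached:
  assumes u: "u \<in> {0..1}" and s: "s \<in> {0..1}" and us: "u \<le> s" and gs: "g s = \<phi> (r s)"
    and w: "w \<in> {r u..r s}"
  shows "\<exists>x\<in>{u..s}. r x = w \<and> g x = \<phi> w"
proof (cases "w = r s")
  case True
  then show ?thesis using us gs by auto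
next
  case False
  have "w \<in> {0..T}" using w r_range[OF u] r_range[OF s] by auto
  then obtain x where x: "x \<in> {0..1}" "r x = w" "g x = \<phi> w" using phi_attained by blast
  have "x < s" using less_if_r_less[OF x(1) s] x(2) w False by auto
  show ?thesis
  proof (cases "u \<le> x")
    case True
    then show ?thesis using x \<open>x < s\<close> by auto
  next
    case False
    then have "r u = w" using r_mono[OF x(1) u] x(2) w by auto
    moreover have "g u = \<phi> (r u)"
      using fiber_stays_at_phi[OF x(1) u] False x \<open>r u = w\<close> by auto
    ultimately show ?thesis using us by auto
  qed
qed

text \<open>Starting from a point where g = phi, g stays above every lower bound of phi on
  the traversed time interval, since in between it only takes values of phi and of
  left limits of phi.\<close>

lemma g_lower_bound:
  assumes u: "u \<in> {0..1}" and s: "s \<in> {0..1}" and w: "u \<le> w" "w \<le> s"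
    and gu: "g u = \<phi> (r u)" and c: "\<And>x. x \<in> {r u..r s} \<Longrightarrow> c \<le> \<phi> x"
  shows "c \<le> g w"
proof -
  have w1: "w \<in> {0..1}" using u s w by auto
  have rw: "r u \<le> r w" "r w \<le> r s" using r_mono u s w1 w by auto
  show ?thesis
  proof (cases "r w = r u")
    case True
    have "g w = \<phi> (r w)" using fiber_stays_at_phi[OF u w1 w(1)] True gu by simp
    thus ?thesis using c[of "r w"] rw by auto
  next
    case False
    have "c \<le> leftlim \<phi> (r w)"
      by (rule leftlim_lower_bound[of "r u" _ "r s"]) (use r_range u s rw False c in auto)
    moreover have "c \<le> \<phi> (r w)" using c[of "r w"] rw by auto
    ultimately show ?thesis using g_on_segment[OF w1] by auto
  qed
qed

text \<open>If g = phi at the start u,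
  then g stays above inf phi on [r(u), r(s)] (lemma g_lower_bound); if g = phi at the
  end s, then every value of phi on [r(u), r(s)] is a value of g on [u,s].\<close>

lemma INF_phi_le_INF_g:
  assumes u: "u \<in> {0..1}" and s: "s \<in> {0..1}" and us: "u \<le> s" and gu: "g u = \<phi> (r u)"
  shows "(INF x\<in>{r u..r s}. \<phi> x) \<le> (INF x\<in>{u..s}. g x)"
proof -
  obtain B where "\<forall>x\<in>{0..1}. \<bar>g x\<bar> \<le> B" and Bp: "\<forall>t\<in>{0..T}. \<bar>\<phi> t\<bar> \<le> B"
    by (rule common_bound)
  have lower: "(INF x\<in>{r u..r s}. \<phi> x) \<le> \<phi> x" if "x \<in> {r u..r s}" for x
    by (rule INF_Icc_lower[OF Bp]) (use that r_range[OF u] r_range[OF s] in auto)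
  show ?thesis
  proof (rule INF_Icc_greatest[OF us])
    fix w assume "w \<in> {u..s}"
    then have "u \<le> w" "w \<le> s" by auto
    from g_lower_bound[OF u s this gu lower] show "(INF x\<in>{r u..r s}. \<phi> x) \<le> g w" .
  qed
qed

lemma INF_g_le_INF_phi:
  assumes u: "u \<in> {0..1}" and s: "s \<in> {0..1}" and us: "u \<le> s" and gs: "g s = \<phi> (r s)"
  shows "(INF x\<in>{u..s}. g x) \<le> (INF x\<in>{r u..r s}. \<phi> x)"
proof (rule INF_Icc_greatest)
  obtain B where Bg: "\<forall>x\<in>{0..1}. \<bar>g x\<bar> \<le> B" and "\<forall>t\<in>{0..T}. \<bar>\<phi> t\<bar> \<le> B"
    by (rule common_bound)
  show "r u \<le> r s" using r_mono[OF u s us] .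
  fix w assume "w \<in> {r u..r s}"
  then obtain x where x: "x \<in> {u..s}" "g x = \<phi> w"
    using phi_value_reached[OF u s us gs] by blast
  have "(INF x\<in>{u..s}. g x) \<le> g x" by (rule INF_Icc_lower[OF Bg]) (use x u s in auto)
  then show "(INF x\<in>{u..s}. g x) \<le> \<phi> w" using x by simp
qed

text \<open>Key identity, first half: every term of the supremum for phi at r(s) is
  dominated by a term of the supremum for g at s.\<close>

lemma lam_sup_phi_le_lam_sup_g:
  assumes s: "s \<in> {0..1}" and gs: "g s = \<phi> (r s)"
  shows "lam_sup a \<phi> (r s) \<le> lam_sup a g s"
proof -
  obtain B where Bg: "\<forall>x\<in>{0..1}. \<bar>g x\<bar> \<le> B" and Bp: "\<forall>t\<in>{0..T}. \<bar>\<phi> t\<bar> \<le> B"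
    by (rule common_bound)
  show ?thesis
  proof (rule lam_sup_least[OF Bp])
    show "0 \<le> r s" using r_range[OF s] by auto
    fix v assume v: "v \<in> {0..r s}"
    obtain u where u: "u \<in> {0..s}" "r u = v" "g u = \<phi> v"
      using phi_value_reached[of 0 s v] s gs v r_0 by auto
    have u1: "u \<in> {0..1}" using u s by auto
    have "u \<le> s" "g u = \<phi> (r u)" using u by auto
    from INF_phi_le_INF_g[OF u1 s this]
    have "(INF x\<in>{v..r s}. \<phi> x) \<le> (INF x\<in>{u..s}. g x)" using u(2) by simp
    hence "lam_term a \<phi> (r s) v \<le> lam_term a g s u"
      unfolding lam_term_def using u by (intro min.mono) auto
    also have "\<dots> \<le> lam_sup a g s" by (rule lam_term_le_sup[OF Bg]) (use u s in auto)
    finally show "lam_term a \<phi> (r s) v \<le> lam_sup a g s" .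
  qed
qed

text \<open>Key identity, second half: a term of the supremum for g at s either is
  dominated by the term for phi at r(u), or (when g(u) lies on a jump segment above
  phi(r(u))) by the contribution of the left limit phi(r(u)-).\<close>

lemma lam_sup_g_le_lam_sup_phi:
  assumes s: "s \<in> {0..1}" and gs: "g s = \<phi> (r s)"
  shows "lam_sup a g s \<le> lam_sup a \<phi> (r s)"
proof -
  obtain B where Bg: "\<forall>x\<in>{0..1}. \<bar>g x\<bar> \<le> B" and Bp: "\<forall>t\<in>{0..T}. \<bar>\<phi> t\<bar> \<le> B"
    by (rule common_bound)
  define t where "t = r s"
  have t: "t \<in> {0..T}" using r_range[OF s] t_def by simp
  show ?thesis unfolding t_def[symmetric]
  proof (rule lam_sup_least[OF Bg])
    show "0 \<le> s" using s by auto
    fix u assume u0: "u \<in> {0..s}"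
    have u: "u \<in> {0..1}" using u0 s by auto
    define v where "v = r u"
    have v: "v \<in> {0..t}" using r_range[OF u] r_mono[OF u s] u0 unfolding v_def t_def by auto
    define Ig where "Ig = (INF x\<in>{u..s}. g x)"
    define c where "c = (INF x\<in>{v..t}. \<phi> x)"
    have Ig_le_c: "Ig \<le> c"
      unfolding Ig_def c_def v_def t_def by (rule INF_g_le_INF_phi[OF u s _ gs]) (use u0 in simp)
    have Ig_le_gu: "Ig \<le> g u" unfolding Ig_def by (rule INF_Icc_lower[OF Bg]) (use u0 s in auto)
    have term_g: "lam_term a g s u = min (max (g u - a) 0) Ig" unfolding lam_term_def Ig_def ..
    show "lam_term a g s u \<le> lam_sup a \<phi> t"
    proof (cases "g u \<le> \<phi> v")
      case True
      have term_phi: "lam_term a \<phi> t v = min (max (\<phi> v - a) 0) c" unfolding lam_term_def c_def ..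
      have "lam_term a g s u \<le> lam_term a \<phi> t v"
        unfolding term_g term_phi using Ig_le_c True by (intro min.mono max.mono) auto
      also have "\<dots> \<le> lam_sup a \<phi> t" by (rule lam_term_le_sup[OF Bp]) (use v t in auto)
      finally show ?thesis .
    next
      case False
      define L where "L = leftlim \<phi> v"
      have "g u \<le> max L (\<phi> v)" using g_on_segment[OF u] unfolding L_def v_def by simp
      then have gL: "g u \<le> L" using False by (simp add: le_max_iff_disj)
      have "v \<noteq> 0"
      proof
        assume "v = 0"
        then have "L = \<phi> v" by (simp add: L_def leftlim_def)
        then show False using gL False by simp
      qed
      have "lam_term a g s u \<le> min (max (L - a) 0) (min L c)"
        unfolding term_g using Ig_le_c Ig_le_gu gL by (intro min.mono max.mono) auto
      also have "\<dots> \<le> lam_sup a \<phi> t" unfolding L_def c_def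
        by (rule lam_sup_ge_leftlim_term[OF Bp leftlim_tendsto]) (use \<open>v \<noteq> 0\<close> v t in auto)
      finally show ?thesis .
    qed
  qed
qed

lemma Lambda_g_eq_Lambda_phi:
  assumes "s \<in> {0..1}" "g s = \<phi> (r s)"
  shows "Lambda a g s = Lambda a \<phi> (r s)"
proof -
  have "lam_sup a g s = lam_sup a \<phi> (r s)"
    using lam_sup_g_le_lam_sup_phi[OF assms] lam_sup_phi_le_lam_sup_g[OF assms] by (rule order.antisym)
  then show ?thesis using assms(2) by (simp add: Lambda_eq)
qed

lemma first_of_fiber:
  assumes t: "t \<in> {0..T}"
  obtains p where "p \<in> {0..1}" "r p = t" "\<And>s. s \<in> {0..1} \<Longrightarrow> r s = t \<Longrightarrow> p \<le> s"
proof -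
  define P where "P = {s \<in> {0..1}. r s = t}"
  have "closed P" unfolding P_def by (rule continuous_closed_preimage_constant[OF r_continuous]) simp
  moreover have "P \<noteq> {}" using phi_attained[OF t] unfolding P_def by auto
  moreover have bdd: "bdd_below P" unfolding P_def by (rule bdd_belowI[where m=0]) auto
  ultimately have "Inf P \<in> P" by (intro closed_contains_Inf)
  then show ?thesis using that[of "Inf P"] cInf_lower[OF _ bdd] unfolding P_def by auto
qed

lemma Lambda_along_fiber:
  assumes x: "x \<in> {0..1}" and y: "y \<in> {0..1}" and xy: "x \<le> y" and rxy: "r x = r y"
  shows "(leftlim \<phi> (r x) \<le> \<phi> (r x) \<longrightarrow> Lambda a g x \<le> Lambda a g y) \<and>
         (\<not> leftlim \<phi> (r x) \<le> \<phi> (r x) \<longrightarrow> Lambda a g y \<le> Lambda a g x)"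
proof -
  obtain B where Bg: "\<forall>x\<in>{0..1}. \<bar>g x\<bar> \<le> B" and "\<forall>t\<in>{0..T}. \<bar>\<phi> t\<bar> \<le> B"
    by (rule common_bound)
  have dir: "(leftlim \<phi> (r x) \<le> \<phi> (r x) \<longrightarrow> g u \<le> g y) \<and> (\<not> leftlim \<phi> (r x) \<le> \<phi> (r x) \<longrightarrow> g y \<le> g u)"
    if "u \<in> {x..y}" for u
  proof -
    from that have "x \<le> u" "u \<le> y" by auto
    then have u: "u \<in> {0..1} \<and> r u = r x" by (rule fiber_interval[OF x y _ _ rxy])
    then have "r u = r y" using rxy by simp
    from fiber_direction[OF _ y \<open>u \<le> y\<close> this] u show ?thesis by simp
  qed
  show ?thesis
  proof (intro conjI impI)
    assume up: "leftlim \<phi> (r x) \<le> \<phi> (r x)"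
    show "Lambda a g x \<le> Lambda a g y"
    proof (rule Lambda_le_if_below_end[OF Bg])
      fix u assume "u \<in> {x..y}"
      then show "g u \<le> g y" using dir up by blast
    qed (use x y xy in auto)
  next
    assume down: "\<not> leftlim \<phi> (r x) \<le> \<phi> (r x)"
    show "Lambda a g y \<le> Lambda a g x"
    proof (rule Lambda_ge_if_above_end[OF Bg])
      fix u assume "u \<in> {x..y}"
      then show "g y \<le> g u" using dir down by blast
    qed (use x y xy in auto)
  qed
qed

lemma Lambda_between_on_fiber:
  assumes p: "p \<in> {0..1}" and s2: "s2 \<in> {0..1}" and o: "p \<le> s1" "s1 \<le> s2" and rr: "r p = r s2"
  shows "(Lambda a g p \<le> Lambda a g s1 \<and> Lambda a g s1 \<le> Lambda a g s2) \<or>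
         (Lambda a g s2 \<le> Lambda a g s1 \<and> Lambda a g s1 \<le> Lambda a g p)"
proof -
  have s1: "s1 \<in> {0..1}" "r s1 = r p" using fiber_interval[OF p s2 o rr] by auto
  have first: "(leftlim \<phi> (r p) \<le> \<phi> (r p) \<longrightarrow> Lambda a g p \<le> Lambda a g s1) \<and>
      (\<not> leftlim \<phi> (r p) \<le> \<phi> (r p) \<longrightarrow> Lambda a g s1 \<le> Lambda a g p)"
    by (rule Lambda_along_fiber[OF p s1(1) o(1) s1(2)[symmetric]])
  have second: "(leftlim \<phi> (r p) \<le> \<phi> (r p) \<longrightarrow> Lambda a g s1 \<le> Lambda a g s2) \<and>
      (\<not> leftlim \<phi> (r p) \<le> \<phi> (r p) \<longrightarrow> Lambda a g s2 \<le> Lambda a g s1)"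
    using Lambda_along_fiber[OF s1(1) s2 o(2)] s1(2) rr by simp
  show ?thesis using first second by blast
qed

text \<open>The left limit of Lambda_a(phi) at t is Lambda_a(g) at the first parameter of
  the fibre over t: approach t from the left along points where g = phi.\<close>

lemma leftlim_Lambda:
  assumes t: "t \<in> {0..T}" and p: "p \<in> {0..1}" "r p = t"
    and first: "\<And>s. s \<in> {0..1} \<Longrightarrow> r s = t \<Longrightarrow> p \<le> s"
  shows "leftlim (Lambda a \<phi>) t = Lambda a g p"
proof (cases "t = 0")
  case True
  hence "p = 0" using first[of 0] r_0 p by auto
  thus ?thesis using True Lambda_g_eq_Lambda_phi[of 0] g_0 r_0 by (simp add: leftlim_def)
next
  case False
  hence t0: "t > 0" using t by auto
  have "continuous_on {0..1} (Lambda a g)" by (rule Lambda_continuous[OF g_continuous])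
  have "p > 0" using p r_0 t0 by (cases "p = 0") auto
  have "(Lambda a \<phi> \<longlongrightarrow> Lambda a g p) (at_left t)"
    unfolding tendsto_iff
  proof (intro allI impI)
    fix e :: real assume e: "e > 0"
    obtain d where d: "d > 0"
      "\<And>x. x \<in> {0..1} \<Longrightarrow> dist x p < d \<Longrightarrow> dist (Lambda a g x) (Lambda a g p) < e"
      using \<open>continuous_on {0..1} (Lambda a g)\<close> p(1) e unfolding continuous_on_iff by metis
    define s0 where "s0 = max 0 (p - d/2)"
    have s0: "s0 \<in> {0..1}" "s0 < p" "p - s0 < d" using p \<open>p > 0\<close> d by (auto simp: s0_def)
    have "r s0 \<noteq> t" using first[OF s0(1)] s0(2) by force
    hence rs0: "r s0 < t" using r_mono[OF s0(1) p(1)] s0 p by auto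
    show "\<forall>\<^sub>F x in at_left t. dist (Lambda a \<phi> x) (Lambda a g p) < e"
      using eventually_at_left_real[OF rs0]
    proof eventually_elim
      case (elim x)
      hence x: "x \<in> {0..T}" using r_range[OF s0(1)] t by auto
      obtain s' where s': "s' \<in> {0..1}" "r s' = x" "g s' = \<phi> x" using phi_attained[OF x] by auto
      have "s0 < s'" "s' < p"
        using less_if_r_less[OF s0(1) s'(1)] less_if_r_less[OF s'(1) p(1)] s' p elim by auto
      hence "dist (Lambda a g s') (Lambda a g p) < e" using d s' s0 by (auto simp: dist_real_def)
      moreover have "Lambda a g s' = Lambda a \<phi> x" using Lambda_g_eq_Lambda_phi[OF s'(1)] s' by simp
      ultimately show ?case by simp
    qed
  qed
  then have "Lim (at_left t) (Lambda a \<phi>) = Lambda a g p" by (rule tendsto_Lim[rotated]) simp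
  thus ?thesis using t0 by (simp add: leftlim_def)
qed

lemma fiber_endpoints:
  assumes t: "t \<in> {0..T}" and q: "q \<in> {0..1}" "r q = t"
  obtains p m where "p \<in> {0..1}" "r p = t" "\<And>s. s \<in> {0..1} \<Longrightarrow> r s = t \<Longrightarrow> p \<le> s"
    "m \<in> {0..1}" "r m = t" "p \<le> m" "q \<le> m"
    "leftlim (Lambda a \<phi>) t = Lambda a g p" "Lambda a g m = Lambda a \<phi> t"
proof -
  obtain p where p: "p \<in> {0..1}" "r p = t" and first: "\<And>s. s \<in> {0..1} \<Longrightarrow> r s = t \<Longrightarrow> p \<le> s"
    using first_of_fiber[OF t] by blast
  obtain e where e: "e \<in> {0..1}" "r e = t" "g e = \<phi> t" using phi_attained[OF t] by blast
  define m where "m = max q e"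
  have m: "m \<in> {0..1}" "r m = t" "q \<le> m" using q e by (auto simp: m_def max_def)
  have "g m = \<phi> (r m)" using fiber_stays_at_phi[OF e(1) m(1)] e m by (auto simp: m_def)
  then have "Lambda a g m = Lambda a \<phi> t" using Lambda_g_eq_Lambda_phi[OF m(1)] m(2) by simp
  moreover have "p \<le> m" using first m by auto
  ultimately show ?thesis using that p first m leftlim_Lambda[OF t p first] by blast
qed

lemma image_subset: "(\<lambda>s. (r s, Lambda a g s)) ` {0..1} \<subseteq> cgraph T (Lambda a \<phi>)"
proof clarify
  fix s :: real assume s: "s \<in> {0..1}"
  define t where "t = r s"
  have t: "t \<in> {0..T}" using r_range[OF s] t_def by simp
  obtain p m where p: "p \<in> {0..1}" "r p = t" "\<And>s. s \<in> {0..1} \<Longrightarrow> r s = t \<Longrightarrow> p \<le> s"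
    and m: "m \<in> {0..1}" "r m = t" "s \<le> m"
    and ends: "leftlim (Lambda a \<phi>) t = Lambda a g p" "Lambda a g m = Lambda a \<phi> t"
    using fiber_endpoints[OF t s t_def[symmetric]] by metis
  have "p \<le> s" using p s t_def by auto
  then have "(Lambda a g p \<le> Lambda a g s \<and> Lambda a g s \<le> Lambda a g m) \<or>
             (Lambda a g m \<le> Lambda a g s \<and> Lambda a g s \<le> Lambda a g p)"
    by (rule Lambda_between_on_fiber[OF p(1) m(1) _ m(3)]) (use p m in auto)
  then show "(r s, Lambda a g s) \<in> cgraph T (Lambda a \<phi>)"
    unfolding cgraph_def using ends t t_def by auto
qed

lemma image_supset: "cgraph T (Lambda a \<phi>) \<subseteq> (\<lambda>s. (r s, Lambda a g s)) ` {0..1}"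
proof clarify
  fix t z assume "(t, z) \<in> cgraph T (Lambda a \<phi>)"
  then have t: "t \<in> {0..T}"
    and z: "min (leftlim (Lambda a \<phi>) t) (Lambda a \<phi> t) \<le> z" "z \<le> max (leftlim (Lambda a \<phi>) t) (Lambda a \<phi> t)"
    unfolding cgraph_def by auto
  obtain q where q: "q \<in> {0..1}" "r q = t" using phi_attained[OF t] by blast
  obtain p m where p: "p \<in> {0..1}" "r p = t" and m: "m \<in> {0..1}" "r m = t" "p \<le> m"
    and ends: "leftlim (Lambda a \<phi>) t = Lambda a g p" "Lambda a g m = Lambda a \<phi> t"
    using fiber_endpoints[OF t q] by metis
  have "continuous_on {p..m} (Lambda a g)"
    by (rule continuous_on_subset[OF Lambda_continuous[OF g_continuous]]) (use p m in auto)
  then obtain x where x: "p \<le> x" "x \<le> m" "Lambda a g x = z"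
    using IVT'[of "Lambda a g" p z m] IVT2'[of "Lambda a g" m z p] z ends m(3)
    by (cases "Lambda a g p \<le> Lambda a g m") auto
  have "x \<in> {0..1} \<and> r x = r p" using fiber_interval[OF p(1) m(1) x(1,2)] p m by auto
  then show "(t, z) \<in> (\<lambda>s. (r s, Lambda a g s)) ` {0..1}"
    using x p by (auto intro: image_eqI[where x=x])
qed

lemma Lambda_graph_mono:
  assumes s1: "s1 \<in> {0..1}" and s2: "s2 \<in> {0..1}" and le: "s1 \<le> s2"
  shows "graph_le (Lambda a \<phi>) (r s1, Lambda a g s1) (r s2, Lambda a g s2)"
proof (cases "r s1 < r s2")
  case True
  then show ?thesis by (simp add: graph_le_def)
next
  case False
  define t where "t = r s1"
  have t: "t \<in> {0..T}" and rr: "r s2 = t" using r_range[OF s1] r_mono[OF s1 s2 le] False t_def by auto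
  obtain p m where p: "p \<in> {0..1}" "r p = t" "\<And>s. s \<in> {0..1} \<Longrightarrow> r s = t \<Longrightarrow> p \<le> s"
    and ends: "leftlim (Lambda a \<phi>) t = Lambda a g p"
    using fiber_endpoints[OF t s1 t_def[symmetric]] by metis
  have "p \<le> s1" using p s1 t_def by auto
  then have "(Lambda a g p \<le> Lambda a g s1 \<and> Lambda a g s1 \<le> Lambda a g s2) \<or>
             (Lambda a g s2 \<le> Lambda a g s1 \<and> Lambda a g s1 \<le> Lambda a g p)"
    by (rule Lambda_between_on_fiber[OF p(1) s2 _ le]) (use p rr in auto)
  then show ?thesis using ends rr t_def by (auto simp: graph_le_def)
qed

theorem Lambda_param_rep: "(r, Lambda a g) \<in> param_reps T (Lambda a \<phi>)"
proof -
  have "(\<lambda>s. (r s, Lambda a g s)) ` {0..1} = cgraph T (Lambda a \<phi>)"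
    using image_subset image_supset by (rule subset_antisym)
  then show ?thesis unfolding param_reps_def
    using r_continuous Lambda_continuous[OF g_continuous] Lambda_graph_mono by blast
qed

end

theorem lemmaA1:
  fixes a T :: real and \<phi> r g :: "real \<Rightarrow> real"
  assumes "a > 0" and "T > 0" and "cadlag T \<phi>"
    and "(r, g) \<in> param_reps T \<phi>"
  shows "(r, Lambda a g) \<in> param_reps T (Lambda a \<phi>)"
proof -
  interpret param_rep T \<phi> r g
    using assms(2-4) by unfold_locales
  show ?thesis by (rule Lambda_param_rep)
qed

end
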